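(* Let $A,B$ be nilpotent $n\times n$ complex matrices in Jordan normal form, and let $\xi>0$. If there exists an invertible matrix $C$ with $\|C\|,\|C^{-1}\|\le\xi$ such that $\|AC-CB\|=\varepsilon<\frac{1}{n\cdot n!\,\xi^n}$, then $A$ and $B$ have the same Jordan structure, i.e. for every $k\ge1$ they have the same number of Jordan blocks of dimension $k$.
   Context: $\|\cdot\|$ denotes the operator norm on $n\times n$ matrices. *)

theory Defs
  imports "Jordan_Normal_Form.Jordan_Normal_Form"
begin

definition vec_norm :: "complex vec \<Rightarrow> real" where
  "vec_norm v = sqrt (\<Sum>i<dim_vec v. (cmod (v $ i))^2)"

definition op_norm :: "complex mat \<Rightarrow> real" where
  "op_norm A = Sup {vec_norm (A *\<^sub>v v) | v. v \<in> carrier_vec (dim_col A) \<and> vec_norm v = 1}"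

definition nilpotent_mat :: "complex mat \<Rightarrow> bool" where
  "nilpotent_mat A \<longleftrightarrow> (\<exists>k. A ^\<^sub>m k = 0\<^sub>m (dim_row A) (dim_col A))"

definition num_blocks :: "(nat \<times> complex) list \<Rightarrow> nat \<Rightarrow> nat" where
  "num_blocks n_as k = length (filter (\<lambda>(s, a). s = k) n_as)"

end

theory Submission
  imports Defs "HOL-Analysis.L2_Norm"
begin

(* Powers of a nilpotent Jordan matrix are partial permutation matrices (inside each block,
   J^k maps e_(i+k) to e_i), so rank J^k = r(k) = \<Sum> (s - k) over the block sizes s, and the
   number of blocks of size k is the second difference r(k-1) - 2 r(k) + r(k+1).  It suffices
   to show rank A^k = rank B^k for k < n.
   A and B are contractions, so telescoping gives ||A^k C - C B^k|| \<le> k \<epsilon>.  If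
   rank A^k < rank B^k, a dimension count yields x \<noteq> 0 with A^k C x = 0, supported on the
   coordinates on which B^k is isometric; then
     ||x|| = ||B^k x|| \<le> \<xi> ||C B^k x|| = \<xi> ||(A^k C - C B^k) x|| \<le> k \<epsilon> \<xi> ||x|| < ||x||.
   The reverse inequality is symmetric, with C^-1 in place of C. *)

section \<open>Norm estimates\<close>

lemma vec_norm_L2_set: "vec_norm v = L2_set (\<lambda>i. cmod (v $ i)) {..<dim_vec v}"
  unfolding vec_norm_def L2_set_def by simp

lemma vec_norm_nonneg: "0 \<le> vec_norm v"
  unfolding vec_norm_L2_set by simp

lemma vec_norm_zero_vec [simp]: "vec_norm (0\<^sub>v n) = 0"
  unfolding vec_norm_def by simp

lemma vec_norm_uminus [simp]: "vec_norm (- v) = vec_norm v"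
  unfolding vec_norm_L2_set by (intro L2_set_cong) auto

lemma vec_norm_smult: "vec_norm (c \<cdot>\<^sub>v v) = cmod c * vec_norm v"
  unfolding vec_norm_L2_set
  by (subst L2_set_right_distrib) (auto simp: norm_mult intro!: L2_set_cong)

lemma cmod_index_le_vec_norm: "i < dim_vec v \<Longrightarrow> cmod (v $ i) \<le> vec_norm v"
  unfolding vec_norm_L2_set by (rule member_le_L2_set) auto

lemma vec_norm_pos:
  assumes "v \<in> carrier_vec n" and "v \<noteq> 0\<^sub>v n"
  shows "0 < vec_norm v"
proof -
  obtain i where "i < n" and "v $ i \<noteq> 0"
    using assms by (metis eq_vecI carrier_vecD index_zero_vec)
  then have "0 < cmod (v $ i)"
    by simp
  also have "\<dots> \<le> vec_norm v"
    using \<open>i < n\<close> assms(1) by (intro cmod_index_le_vec_norm) auto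
  finally show ?thesis .
qed

lemma vec_norm_add_le:
  assumes "v \<in> carrier_vec n" and "w \<in> carrier_vec n"
  shows "vec_norm (v + w) \<le> vec_norm v + vec_norm w"
proof -
  have "vec_norm (v + w) = L2_set (\<lambda>i. cmod (v $ i + w $ i)) {..<n}"
    unfolding vec_norm_L2_set using assms by (intro L2_set_cong) auto
  also have "\<dots> \<le> L2_set (\<lambda>i. cmod (v $ i) + cmod (w $ i)) {..<n}"
    by (rule L2_set_mono) (auto simp: norm_triangle_ineq)
  also have "\<dots> \<le> L2_set (\<lambda>i. cmod (v $ i)) {..<n} + L2_set (\<lambda>i. cmod (w $ i)) {..<n}"
    by (rule L2_set_triangle_ineq)
  finally show ?thesis
    unfolding vec_norm_L2_set using assms by simp
qed

lemma vec_norm_mult_mat_vec_le: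
  assumes M: "M \<in> carrier_mat m n" and x: "x \<in> carrier_vec n"
  shows "vec_norm (M *\<^sub>v x) \<le> (\<Sum>i<m. \<Sum>j<n. cmod (M $$ (i, j))) * vec_norm x"
proof -
  have row_le: "cmod ((M *\<^sub>v x) $ i) \<le> (\<Sum>j<n. cmod (M $$ (i, j))) * vec_norm x" if "i < m" for i
  proof -
    have "(M *\<^sub>v x) $ i = (\<Sum>j<n. M $$ (i, j) * x $ j)"
      using M x that by (auto simp: scalar_prod_def lessThan_atLeast0 intro!: sum.cong)
    then have "cmod ((M *\<^sub>v x) $ i) \<le> (\<Sum>j<n. cmod (M $$ (i, j)) * cmod (x $ j))"
      by (auto intro!: order.trans[OF norm_sum] simp: norm_mult)
    also have "\<dots> \<le> (\<Sum>j<n. cmod (M $$ (i, j)) * vec_norm x)"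
      using x cmod_index_le_vec_norm[of _ x] by (intro sum_mono mult_left_mono) auto
    finally show ?thesis
      by (simp add: sum_distrib_right)
  qed
  have "vec_norm (M *\<^sub>v x) = L2_set (\<lambda>i. cmod ((M *\<^sub>v x) $ i)) {..<m}"
    unfolding vec_norm_L2_set using M by simp
  also have "\<dots> \<le> L2_set (\<lambda>i. (\<Sum>j<n. cmod (M $$ (i, j))) * vec_norm x) {..<m}"
    using row_le by (intro L2_set_mono) auto
  also have "\<dots> \<le> (\<Sum>i<m. (\<Sum>j<n. cmod (M $$ (i, j))) * vec_norm x)"
    by (rule L2_set_le_sum) (auto intro!: mult_nonneg_nonneg sum_nonneg vec_norm_nonneg)
  finally show ?thesis
    by (simp add: sum_distrib_right)
qed

lemma vec_norm_mult_mat_vec_le_op_norm: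
  assumes M: "M \<in> carrier_mat m n" and x: "x \<in> carrier_vec n"
  shows "vec_norm (M *\<^sub>v x) \<le> op_norm M * vec_norm x"
proof (cases "x = 0\<^sub>v n")
  case True
  have "M *\<^sub>v 0\<^sub>v n = 0\<^sub>v m"
    using M by (intro eq_vecI) auto
  then show ?thesis
    using True by simp
next
  case False
  let ?S = "{vec_norm (M *\<^sub>v v) | v. v \<in> carrier_vec (dim_col M) \<and> vec_norm v = 1}"
  have bdd: "bdd_above ?S"
    using M vec_norm_mult_mat_vec_le[OF M]
    by (intro bdd_aboveI[of _ "\<Sum>i<m. \<Sum>j<n. cmod (M $$ (i, j))"]) fastforce
  have x_pos: "0 < vec_norm x"
    using vec_norm_pos[OF x False] .
  define u where "u = complex_of_real (1 / vec_norm x) \<cdot>\<^sub>v x"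
  have "u \<in> carrier_vec n" and "vec_norm u = 1"
    unfolding u_def vec_norm_smult using x x_pos by (auto simp: norm_divide)
  then have "vec_norm (M *\<^sub>v u) \<le> op_norm M"
    unfolding op_norm_def using M by (intro cSup_upper[OF _ bdd]) auto
  moreover have "vec_norm (M *\<^sub>v u) = vec_norm (M *\<^sub>v x) / vec_norm x"
    unfolding u_def mult_mat_vec[OF M x] vec_norm_smult using x_pos by (simp add: norm_divide)
  ultimately show ?thesis
    using x_pos by (simp add: divide_le_eq mult.commute)
qed

lemma vec_norm_mult_mat_vec_le_of_op_norm_le:
  assumes "M \<in> carrier_mat m n" and "op_norm M \<le> c" and "x \<in> carrier_vec n"
  shows "vec_norm (M *\<^sub>v x) \<le> c * vec_norm x"
  using vec_norm_mult_mat_vec_le_op_norm[OF assms(1,3)] mult_right_mono[OF assms(2) vec_norm_nonneg[of x]]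
  by linarith

(* For n = 0 the supremum defining op_norm ranges over the empty set. *)
lemma op_norm_nonneg:
  assumes M: "M \<in> carrier_mat m n" and "0 < n"
  shows "0 \<le> op_norm M"
proof -
  have e: "unit_vec n 0 \<in> carrier_vec n" "unit_vec n 0 \<noteq> 0\<^sub>v n"
    using \<open>0 < n\<close> by (auto simp: vec_eq_iff)
  have "0 \<le> op_norm M * vec_norm (unit_vec n 0)"
    using vec_norm_mult_mat_vec_le_op_norm[OF M e(1)] vec_norm_nonneg order_trans by blast
  then show ?thesis
    using vec_norm_pos[OF e] by (simp add: zero_le_mult_iff)
qed

lemma op_norm_mult_op_norm_inverse_ge_1:
  assumes M: "M \<in> carrier_mat n n" and Mi: "Mi \<in> carrier_mat n n"
    and inv: "M * Mi = 1\<^sub>m n" and "0 < n"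
  shows "1 \<le> op_norm M * op_norm Mi"
proof -
  have e: "unit_vec n 0 \<in> carrier_vec n" "unit_vec n 0 \<noteq> 0\<^sub>v n"
    using \<open>0 < n\<close> by (auto simp: vec_eq_iff)
  let ?e = "unit_vec n 0 :: complex vec"
  have "vec_norm ?e = vec_norm (M *\<^sub>v (Mi *\<^sub>v ?e))"
    using M Mi e inv by (simp flip: assoc_mult_mat_vec)
  also have "\<dots> \<le> op_norm M * vec_norm (Mi *\<^sub>v ?e)"
    using Mi e by (intro vec_norm_mult_mat_vec_le_op_norm[OF M]) auto
  also have "\<dots> \<le> op_norm M * (op_norm Mi * vec_norm ?e)"
    using op_norm_nonneg[OF M \<open>0 < n\<close>]
    by (intro mult_left_mono vec_norm_mult_mat_vec_le_op_norm[OF Mi e(1)])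
  finally show ?thesis
    using vec_norm_pos[OF e] by (simp add: mult.assoc)
qed

lemma mult_mat_vec_diff_of_products:
  fixes A :: "'a :: ring mat"
  assumes "A \<in> carrier_mat m p" "B \<in> carrier_mat p q" "C \<in> carrier_mat m r" "D \<in> carrier_mat r q"
    and "x \<in> carrier_vec q"
  shows "(A * B - C * D) *\<^sub>v x = A *\<^sub>v (B *\<^sub>v x) - C *\<^sub>v (D *\<^sub>v x)"
  using minus_mult_distrib_mat_vec[OF mult_carrier_mat[OF assms(1,2)] mult_carrier_mat[OF assms(3,4)]]
    assms by simp

lemma vec_norm_pow_mat_le:
  assumes A: "A \<in> carrier_mat n n"
    and contr: "\<And>y. y \<in> carrier_vec n \<Longrightarrow> vec_norm (A *\<^sub>v y) \<le> vec_norm y"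
    and x: "x \<in> carrier_vec n"
  shows "vec_norm (A ^\<^sub>m k *\<^sub>v x) \<le> vec_norm x"
  using x
proof (induction k arbitrary: x)
  case 0
  then show ?case
    using A by simp
next
  case (Suc k)
  have "A ^\<^sub>m Suc k *\<^sub>v x = A ^\<^sub>m k *\<^sub>v (A *\<^sub>v x)"
    using A Suc.prems by (simp add: assoc_mult_mat_vec[of _ n n])
  then show ?case
    using Suc A contr[OF Suc.prems] by (metis mult_mat_vec_carrier order_trans)
qed

lemma intertwining_defect_pow_Suc_mult_vec:
  fixes A :: "'a :: comm_ring_1 mat"
  assumes A: "A \<in> carrier_mat n n" and B: "B \<in> carrier_mat n n" and C: "C \<in> carrier_mat n n"
    and x: "x \<in> carrier_vec n"
  shows "(A ^\<^sub>m Suc k * C - C * B ^\<^sub>m Suc k) *\<^sub>v x =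
    A ^\<^sub>m k *\<^sub>v ((A * C - C * B) *\<^sub>v x) + (A ^\<^sub>m k * C - C * B ^\<^sub>m k) *\<^sub>v (B *\<^sub>v x)"
proof -
  have Ak: "A ^\<^sub>m k \<in> carrier_mat n n" and Bk: "B ^\<^sub>m k \<in> carrier_mat n n"
    using A B by auto
  define a where "a = A ^\<^sub>m k *\<^sub>v (A *\<^sub>v (C *\<^sub>v x))"
  define b where "b = A ^\<^sub>m k *\<^sub>v (C *\<^sub>v (B *\<^sub>v x))"
  define c where "c = C *\<^sub>v (B ^\<^sub>m k *\<^sub>v (B *\<^sub>v x))"
  have abc: "a \<in> carrier_vec n" "b \<in> carrier_vec n" "c \<in> carrier_vec n"
    unfolding a_def b_def c_def using A B C Ak Bk x
    by (auto intro!: mult_mat_vec_carrier[of _ n n])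
  have "(A ^\<^sub>m Suc k * C - C * B ^\<^sub>m Suc k) *\<^sub>v x = a - c"
    unfolding a_def c_def pow_mat.simps(2)
    using mult_mat_vec_diff_of_products[OF mult_carrier_mat[OF Ak A] C C mult_carrier_mat[OF Bk B]]
      assoc_mult_mat_vec[OF Ak A, of "C *\<^sub>v x"] assoc_mult_mat_vec[OF Bk B] C x
    by simp
  also have "\<dots> = (a - b) + (b - c)"
    using abc by (intro eq_vecI) auto
  also have "a - b = A ^\<^sub>m k *\<^sub>v ((A * C - C * B) *\<^sub>v x)"
    unfolding a_def b_def using A B C Ak x
    by (simp add: mult_mat_vec_diff_of_products[of _ n n _ n] mult_minus_distrib_mat_vec[of _ n n])
  also have "b - c = (A ^\<^sub>m k * C - C * B ^\<^sub>m k) *\<^sub>v (B *\<^sub>v x)"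
    unfolding b_def c_def using B C Ak Bk x
    by (simp add: mult_mat_vec_diff_of_products[of _ n n _ n])
  finally show ?thesis .
qed

lemma vec_norm_intertwining_defect_pow_le:
  assumes A: "A \<in> carrier_mat n n" and B: "B \<in> carrier_mat n n" and C: "C \<in> carrier_mat n n"
    and A_contr: "\<And>y. y \<in> carrier_vec n \<Longrightarrow> vec_norm (A *\<^sub>v y) \<le> vec_norm y"
    and B_contr: "\<And>y. y \<in> carrier_vec n \<Longrightarrow> vec_norm (B *\<^sub>v y) \<le> vec_norm y"
    and defect: "\<And>y. y \<in> carrier_vec n \<Longrightarrow> vec_norm ((A * C - C * B) *\<^sub>v y) \<le> \<epsilon> * vec_norm y"
    and "0 \<le> \<epsilon>" and x: "x \<in> carrier_vec n"
  shows "vec_norm ((A ^\<^sub>m k * C - C * B ^\<^sub>m k) *\<^sub>v x) \<le> real k * \<epsilon> * vec_norm x"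
  using x
proof (induction k arbitrary: x)
  case 0
  have "(A ^\<^sub>m 0 * C - C * B ^\<^sub>m 0) *\<^sub>v x = C *\<^sub>v x - C *\<^sub>v x"
    using A B C 0 by (subst mult_mat_vec_diff_of_products[of _ n n _ n]) auto
  also have "\<dots> = 0\<^sub>v n"
    using C 0 by simp
  finally show ?case
    by simp
next
  case (Suc k)
  have Ak: "A ^\<^sub>m k \<in> carrier_mat n n" and Bk: "B ^\<^sub>m k \<in> carrier_mat n n"
    using A B by auto
  have Dx: "(A * C - C * B) *\<^sub>v x \<in> carrier_vec n" and Bx: "B *\<^sub>v x \<in> carrier_vec n"
    using A B C Suc.prems by (metis minus_carrier_mat mult_carrier_mat mult_mat_vec_carrier)+
  have "A ^\<^sub>m k *\<^sub>v ((A * C - C * B) *\<^sub>v x) \<in> carrier_vec n"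
    and "(A ^\<^sub>m k * C - C * B ^\<^sub>m k) *\<^sub>v (B *\<^sub>v x) \<in> carrier_vec n"
    using Ak Bk C Dx Bx by (metis minus_carrier_mat mult_carrier_mat mult_mat_vec_carrier)+
  then have "vec_norm ((A ^\<^sub>m Suc k * C - C * B ^\<^sub>m Suc k) *\<^sub>v x) \<le>
      vec_norm (A ^\<^sub>m k *\<^sub>v ((A * C - C * B) *\<^sub>v x)) +
      vec_norm ((A ^\<^sub>m k * C - C * B ^\<^sub>m k) *\<^sub>v (B *\<^sub>v x))"
    unfolding intertwining_defect_pow_Suc_mult_vec[OF A B C Suc.prems] by (rule vec_norm_add_le)
  also have "\<dots> \<le> \<epsilon> * vec_norm x + real k * \<epsilon> * vec_norm x"
  proof (rule add_mono)
    show "vec_norm (A ^\<^sub>m k *\<^sub>v ((A * C - C * B) *\<^sub>v x)) \<le> \<epsilon> * vec_norm x"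
      by (meson A A_contr Dx defect Suc.prems order_trans vec_norm_pow_mat_le)
    show "vec_norm ((A ^\<^sub>m k * C - C * B ^\<^sub>m k) *\<^sub>v (B *\<^sub>v x)) \<le> real k * \<epsilon> * vec_norm x"
      using Suc.IH[OF Bx] B_contr[OF Suc.prems] \<open>0 \<le> \<epsilon>\<close>
      by (meson mult_left_mono order_trans mult_nonneg_nonneg of_nat_0_le_iff)
  qed
  finally show ?case
    by (simp add: algebra_simps)
qed

section \<open>Underdetermined homogeneous systems\<close>

lemma exists_nonzero_vec_orthogonal:
  fixes rs :: "'a :: idom vec list"
  assumes rs: "set rs \<subseteq> carrier_vec n" and len: "length rs < n"
  obtains x where "x \<in> carrier_vec n" "x \<noteq> 0\<^sub>v n" "\<forall>r\<in>set rs. r \<bullet> x = 0"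
proof -
  define T where "T = mat_of_rows n (rs @ replicate (n - length rs) (0\<^sub>v n))"
  have T: "T \<in> carrier_mat n n"
    using mat_of_rows_carrier(1)[of n "rs @ replicate (n - length rs) (0\<^sub>v n)"] len
    unfolding T_def by simp
  have "det T = (\<Sum>j<n. T $$ (length rs, j) * cofactor T (length rs) j)"
    by (rule laplace_expansion_row[OF T len])
  also have "\<dots> = 0"
    using len by (simp add: T_def mat_of_rows_index nth_append)
  finally have "det T = 0" .
  then obtain x where x: "x \<in> carrier_vec n" "x \<noteq> 0\<^sub>v n" "T *\<^sub>v x = 0\<^sub>v n"
    using det_0_iff_vec_prod_zero[OF T] by auto
  have "\<forall>r\<in>set rs. r \<bullet> x = 0"
  proof
    fix r assume "r \<in> set rs"
    then obtain i where i: "i < length rs" "r = rs ! i"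
      by (auto simp: in_set_conv_nth)
    then have "row T i = r"
      using rs len unfolding T_def by (subst mat_of_rows_row) (auto simp: nth_append)
    have "i < dim_row T"
      using T i len by simp
    then have "row T i \<bullet> x = 0"
      using x(3) by (metis index_mult_mat_vec index_zero_vec(1) carrier_matD(1) T)
    then show "r \<bullet> x = 0"
      using \<open>row T i = r\<close> by simp
  qed
  with x show thesis
    using that by simp
qed

lemma exists_nonzero_vec_supported_rows_kernel:
  fixes M :: "'a :: idom mat"
  assumes M: "M \<in> carrier_mat m n" and R: "R \<subseteq> {..<m}" and J: "J \<subseteq> {..<n}"
    and card: "card R < card J"
  obtains x where "x \<in> carrier_vec n" "x \<noteq> 0\<^sub>v n" "\<forall>j<n. j \<notin> J \<longrightarrow> x $ j = 0"
    "\<forall>i\<in>R. (M *\<^sub>v x) $ i = 0"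
proof -
  define rs where
    "rs = map (row M) (sorted_list_of_set R) @ map (unit_vec n) (sorted_list_of_set ({..<n} - J))"
  have fin: "finite R" "finite J"
    using finite_subset[OF R] finite_subset[OF J] by simp_all
  have "set rs \<subseteq> carrier_vec n"
    using M unfolding rs_def by auto
  moreover have "length rs < n"
  proof -
    have "card J \<le> n"
      using card_mono[OF _ J] by simp
    moreover have "length rs = card R + (n - card J)"
      unfolding rs_def using fin J by (simp add: card_Diff_subset)
    ultimately show ?thesis
      using card by linarith
  qed
  ultimately obtain x where x: "x \<in> carrier_vec n" "x \<noteq> 0\<^sub>v n" "\<forall>r\<in>set rs. r \<bullet> x = 0"
    using exists_nonzero_vec_orthogonal by blast
  have "x $ j = 0" if "j < n" "j \<notin> J" for j
    using x that fin unfolding rs_def by force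
  moreover have "(M *\<^sub>v x) $ i = 0" if "i \<in> R" for i
    using x that fin R M unfolding rs_def by force
  ultimately show thesis
    using x that by blast
qed

section \<open>Partial permutation matrices\<close>

definition partial_perm_mat :: "'a :: {zero, one} mat \<Rightarrow> nat \<Rightarrow> nat set \<Rightarrow> (nat \<Rightarrow> nat) \<Rightarrow> bool" where
  "partial_perm_mat P n I f \<longleftrightarrow> P \<in> carrier_mat n n \<and> I \<subseteq> {..<n} \<and> inj_on f I \<and> f ` I \<subseteq> {..<n} \<and>
     (\<forall>i<n. \<forall>j<n. P $$ (i, j) = (if i \<in> I \<and> j = f i then 1 else 0))"

lemma partial_perm_mat_mult_vec:
  fixes P :: "'a :: semiring_1 mat"
  assumes P: "partial_perm_mat P n I f" and x: "x \<in> carrier_vec n" and i: "i < n"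
  shows "(P *\<^sub>v x) $ i = (if i \<in> I then x $ f i else 0)"
proof -
  have "(P *\<^sub>v x) $ i = (\<Sum>j<n. P $$ (i, j) * x $ j)"
    using P x i unfolding partial_perm_mat_def
    by (auto simp: scalar_prod_def lessThan_atLeast0 intro!: sum.cong)
  also have "\<dots> = (\<Sum>j<n. if j = f i then (if i \<in> I then x $ j else 0) else 0)"
    using P i unfolding partial_perm_mat_def by (intro sum.cong) auto
  also have "\<dots> = (if i \<in> I then x $ f i else 0)"
    using P unfolding partial_perm_mat_def by (auto simp: sum.delta')
  finally show ?thesis .
qed

lemma partial_perm_mat_sum_squares:
  fixes P :: "complex mat"
  assumes P: "partial_perm_mat P n I f" and x: "x \<in> carrier_vec n"
  shows "(\<Sum>i<n. (cmod ((P *\<^sub>v x) $ i))\<^sup>2) = (\<Sum>j\<in>f ` I. (cmod (x $ j))\<^sup>2)"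
proof -
  have I: "I \<subseteq> {..<n}" "inj_on f I"
    using P unfolding partial_perm_mat_def by auto
  have "(\<Sum>i<n. (cmod ((P *\<^sub>v x) $ i))\<^sup>2) = (\<Sum>i<n. if i \<in> I then (cmod (x $ f i))\<^sup>2 else 0)"
    using partial_perm_mat_mult_vec[OF P x] by (intro sum.cong) auto
  also have "\<dots> = (\<Sum>i\<in>{..<n} \<inter> I. (cmod (x $ f i))\<^sup>2)"
    by (rule sum.inter_restrict[symmetric]) simp
  also have "\<dots> = (\<Sum>i\<in>I. (cmod (x $ f i))\<^sup>2)"
    using I by (simp add: Int_absorb1)
  also have "\<dots> = (\<Sum>j\<in>f ` I. (cmod (x $ j))\<^sup>2)"
    using I by (simp add: sum.reindex)
  finally show ?thesis .
qed

lemma vec_norm_partial_perm_mat_le: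
  assumes P: "partial_perm_mat P n I f" and x: "x \<in> carrier_vec n"
  shows "vec_norm (P *\<^sub>v x) \<le> vec_norm x"
proof -
  have "(\<Sum>j\<in>f ` I. (cmod (x $ j))\<^sup>2) \<le> (\<Sum>j<n. (cmod (x $ j))\<^sup>2)"
    using P unfolding partial_perm_mat_def by (intro sum_mono2) auto
  then show ?thesis
    unfolding vec_norm_def using partial_perm_mat_sum_squares[OF P x] P x
    by (auto simp: partial_perm_mat_def)
qed

lemma vec_norm_partial_perm_mat_eq:
  assumes P: "partial_perm_mat P n I f" and x: "x \<in> carrier_vec n"
    and supp: "\<And>j. j < n \<Longrightarrow> j \<notin> f ` I \<Longrightarrow> x $ j = 0"
  shows "vec_norm (P *\<^sub>v x) = vec_norm x"
proof -
  have "(\<Sum>j\<in>f ` I. (cmod (x $ j))\<^sup>2) = (\<Sum>j<n. (cmod (x $ j))\<^sup>2)"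
    using P supp unfolding partial_perm_mat_def by (intro sum.mono_neutral_left) auto
  then show ?thesis
    unfolding vec_norm_def using partial_perm_mat_sum_squares[OF P x] P x
    by (auto simp: partial_perm_mat_def)
qed

lemma card_Un_image_add:
  fixes n1 :: nat
  assumes "I1 \<subseteq> {..<n1}" and "finite I2"
  shows "card (I1 \<union> (\<lambda>i. i + n1) ` I2) = card I1 + card I2"
proof -
  have "finite I1"
    using finite_subset[OF assms(1)] by simp
  moreover have "I1 \<inter> (\<lambda>i. i + n1) ` I2 = {}"
    using assms(1) by auto
  moreover have "card ((\<lambda>i. i + n1) ` I2) = card I2"
    by (simp add: card_image)
  ultimately show ?thesis
    using assms(2) by (simp add: card_Un_disjoint)
qed

lemma partial_perm_mat_four_block_mat:
  assumes P1: "partial_perm_mat P1 n1 I1 f1" and P2: "partial_perm_mat P2 n2 I2 f2"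
  shows "partial_perm_mat (four_block_mat P1 (0\<^sub>m n1 n2) (0\<^sub>m n2 n1) P2) (n1 + n2)
      (I1 \<union> (\<lambda>i. i + n1) ` I2) (\<lambda>i. if i < n1 then f1 i else f2 (i - n1) + n1)"
proof -
  let ?I = "I1 \<union> (\<lambda>i. i + n1) ` I2"
  let ?f = "\<lambda>i. if i < n1 then f1 i else f2 (i - n1) + n1"
  note d1 = P1[unfolded partial_perm_mat_def] and d2 = P2[unfolded partial_perm_mat_def]
  have mem: "i \<in> ?I \<longleftrightarrow> (if i < n1 then i \<in> I1 else i - n1 \<in> I2)" for i
    using d1 by (auto intro: image_eqI[of _ _ "i - n1"])
  have first_block: "?f i < n1 \<longleftrightarrow> i < n1" if "i \<in> ?I" for i
    using that d1 by (auto simp: mem split: if_splits)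
  have "inj_on ?f ?I"
  proof (rule inj_onI)
    fix x y assume x: "x \<in> ?I" and y: "y \<in> ?I" and eq: "?f x = ?f y"
    have "x < n1 \<longleftrightarrow> ?f x < n1"
      using first_block[OF x] by simp
    also have "\<dots> \<longleftrightarrow> y < n1"
      using eq first_block[OF y] by simp
    finally have "x < n1 \<longleftrightarrow> y < n1" .
    moreover have "inj_on f1 I1" and "inj_on f2 I2"
      using d1 d2 by auto
    ultimately show "x = y"
      using x y eq unfolding mem by (cases "x < n1") (auto dest: inj_onD)
  qed
  moreover have "?I \<subseteq> {..<n1 + n2}" and "?f ` ?I \<subseteq> {..<n1 + n2}"
    using d1 d2 by (auto simp: mem split: if_splits)
  moreover have "four_block_mat P1 (0\<^sub>m n1 n2) (0\<^sub>m n2 n1) P2 $$ (i, j) =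
      (if i \<in> ?I \<and> j = ?f i then 1 else 0)" if "i < n1 + n2" "j < n1 + n2" for i j
    unfolding mem using that d1 d2 by auto
  ultimately show ?thesis
    using d1 d2 unfolding partial_perm_mat_def by auto
qed

lemma partial_perm_mat_kernel_vec_isometric:
  assumes P: "partial_perm_mat P n I f" and Q: "partial_perm_mat Q n J g"
    and M: "M \<in> carrier_mat n n" and card: "card I < card J"
  obtains x where "x \<in> carrier_vec n" "x \<noteq> 0\<^sub>v n" "vec_norm (Q *\<^sub>v x) = vec_norm x"
    "P *\<^sub>v (M *\<^sub>v x) = 0\<^sub>v n"
proof -
  note dP = P[unfolded partial_perm_mat_def] and dQ = Q[unfolded partial_perm_mat_def]
  have "card (f ` I) < card (g ` J)"
    using card dP dQ by (simp add: card_image)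
  then obtain x where x: "x \<in> carrier_vec n" "x \<noteq> 0\<^sub>v n" "\<forall>j<n. j \<notin> g ` J \<longrightarrow> x $ j = 0"
    "\<forall>i\<in>f ` I. (M *\<^sub>v x) $ i = 0"
    using exists_nonzero_vec_supported_rows_kernel[OF M] dP dQ by metis
  have "vec_norm (Q *\<^sub>v x) = vec_norm x"
    using vec_norm_partial_perm_mat_eq[OF Q x(1)] x(3) by blast
  moreover have "P *\<^sub>v (M *\<^sub>v x) = 0\<^sub>v n"
  proof (rule eq_vecI)
    fix i assume "i < dim_vec (0\<^sub>v n :: complex vec)"
    then show "(P *\<^sub>v (M *\<^sub>v x)) $ i = 0\<^sub>v n $ i"
      using partial_perm_mat_mult_vec[OF P, of "M *\<^sub>v x" i] M x(1,4) by simp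
  qed (use dP in auto)
  ultimately show thesis
    using that x(1,2) by blast
qed

lemma partial_perm_mat_card_ge_if_almost_intertwined:
  assumes P: "partial_perm_mat P n I f" and Q: "partial_perm_mat Q n J g"
    and C: "C \<in> carrier_mat n n" and Ci: "Ci \<in> carrier_mat n n" and Ci_C: "Ci * C = 1\<^sub>m n"
    and Ci_le: "\<And>x. x \<in> carrier_vec n \<Longrightarrow> vec_norm (Ci *\<^sub>v x) \<le> \<xi> * vec_norm x"
    and defect: "\<And>x. x \<in> carrier_vec n \<Longrightarrow> vec_norm ((P * C - C * Q) *\<^sub>v x) \<le> \<delta> * vec_norm x"
    and "0 \<le> \<xi>" and small: "\<delta> * \<xi> < 1"
  shows "card J \<le> card I"
proof (rule ccontr)
  assume "\<not> card J \<le> card I"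
  then have "card I < card J"
    by simp
  then obtain x where x: "x \<in> carrier_vec n" "x \<noteq> 0\<^sub>v n" "vec_norm (Q *\<^sub>v x) = vec_norm x"
    "P *\<^sub>v (C *\<^sub>v x) = 0\<^sub>v n"
    using partial_perm_mat_kernel_vec_isometric[OF P Q C] by blast
  have P_carr: "P \<in> carrier_mat n n" and Q_carr: "Q \<in> carrier_mat n n"
    using P Q unfolding partial_perm_mat_def by auto
  have Qx: "Q *\<^sub>v x \<in> carrier_vec n"
    using Q_carr x(1) by simp
  have "(P * C - C * Q) *\<^sub>v x = - (C *\<^sub>v (Q *\<^sub>v x))"
    using mult_mat_vec_diff_of_products[OF P_carr C C Q_carr x(1)] x(4) C Qx by simp
  then have "vec_norm (C *\<^sub>v (Q *\<^sub>v x)) \<le> \<delta> * vec_norm x"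
    using defect[OF x(1)] by simp
  moreover have "vec_norm x = vec_norm (Ci *\<^sub>v (C *\<^sub>v (Q *\<^sub>v x)))"
    using x(3) Ci_C Ci C Qx by (simp flip: assoc_mult_mat_vec)
  ultimately have "vec_norm x \<le> \<xi> * (\<delta> * vec_norm x)"
    using Ci_le[of "C *\<^sub>v (Q *\<^sub>v x)"] C Qx \<open>0 \<le> \<xi>\<close>
    by (metis mult_left_mono mult_mat_vec_carrier order_trans)
  then show False
    using small vec_norm_pos[OF x(1,2)] by (simp add: mult.assoc mult.commute)
qed

lemma partial_perm_mat_card_le_if_almost_intertwined:
  assumes P: "partial_perm_mat P n I f" and Q: "partial_perm_mat Q n J g"
    and C: "C \<in> carrier_mat n n" and Ci: "Ci \<in> carrier_mat n n" and C_Ci: "C * Ci = 1\<^sub>m n"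
    and Ci_le: "\<And>x. x \<in> carrier_vec n \<Longrightarrow> vec_norm (Ci *\<^sub>v x) \<le> \<xi> * vec_norm x"
    and defect: "\<And>x. x \<in> carrier_vec n \<Longrightarrow> vec_norm ((P * C - C * Q) *\<^sub>v x) \<le> \<delta> * vec_norm x"
    and "0 \<le> \<delta>" and small: "\<delta> * \<xi> < 1"
  shows "card I \<le> card J"
proof (rule ccontr)
  assume "\<not> card I \<le> card J"
  then have "card J < card I"
    by simp
  then obtain y where y: "y \<in> carrier_vec n" "y \<noteq> 0\<^sub>v n" "vec_norm (P *\<^sub>v y) = vec_norm y"
    "Q *\<^sub>v (Ci *\<^sub>v y) = 0\<^sub>v n"
    using partial_perm_mat_kernel_vec_isometric[OF Q P Ci] by blast
  have P_carr: "P \<in> carrier_mat n n" and Q_carr: "Q \<in> carrier_mat n n"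
    using P Q unfolding partial_perm_mat_def by auto
  have Ciy: "Ci *\<^sub>v y \<in> carrier_vec n"
    using Ci y(1) by simp
  have "C *\<^sub>v 0\<^sub>v n = 0\<^sub>v n"
    using C by (intro eq_vecI) auto
  then have "(P * C - C * Q) *\<^sub>v (Ci *\<^sub>v y) = P *\<^sub>v y"
    using mult_mat_vec_diff_of_products[OF P_carr C C Q_carr Ciy] y(1,4) C_Ci C Ci P_carr
    by (simp flip: assoc_mult_mat_vec)
  then have "vec_norm y \<le> \<delta> * vec_norm (Ci *\<^sub>v y)"
    using defect[OF Ciy] y(3) by simp
  also have "\<dots> \<le> \<delta> * (\<xi> * vec_norm y)"
    using Ci_le[OF y(1)] \<open>0 \<le> \<delta>\<close> by (rule mult_left_mono)
  finally show False
    using small vec_norm_pos[OF y(1,2)] by (simp add: mult.assoc)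
qed

section \<open>Powers of nilpotent Jordan matrices\<close>

lemma nilpotent_jordan_matrix_eigenvalues_zero:
  assumes "nilpotent_mat (jordan_matrix n_as)"
  shows "\<forall>(s, a)\<in>set n_as. 0 < s \<longrightarrow> a = 0"
proof (rule ccontr)
  let ?A = "jordan_matrix n_as" and ?n = "sum_list (map fst n_as)"
  assume "\<not> ?thesis"
  then obtain s a where sa: "(s, a) \<in> set n_as" "0 < s" "a \<noteq> 0"
    by auto
  have "poly (char_poly ?A) a = 0"
    unfolding jordan_matrix_char_poly poly_prod_list using sa by (force simp: prod_list_zero_iff)
  then obtain v where ev: "eigenvector ?A v a"
    using eigenvalue_root_char_poly[OF jordan_matrix_carrier] unfolding eigenvalue_def by blast
  then have v: "v \<in> carrier_vec ?n" "v \<noteq> 0\<^sub>v ?n"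
    unfolding eigenvector_def by auto
  then obtain i where i: "i < ?n" "v $ i \<noteq> 0"
    by (metis eq_vecI carrier_vecD index_zero_vec)
  obtain m where m: "?A ^\<^sub>m m = 0\<^sub>m ?n ?n"
    using assms unfolding nilpotent_mat_def by auto
  have "a ^ m \<cdot>\<^sub>v v = ?A ^\<^sub>m m *\<^sub>v v"
    using eigenvector_pow[OF jordan_matrix_carrier ev] by simp
  also have "\<dots> = 0\<^sub>v ?n"
    unfolding m using v by auto
  finally have "a ^ m * v $ i = 0"
    using i by (metis index_smult_vec(1) index_zero_vec(1) carrier_vecD v(1))
  then show False
    using i sa by simp
qed

lemma partial_perm_mat_jordan_block_zero_pow:
  "partial_perm_mat (jordan_block s (0 :: 'a :: field) ^\<^sub>m k) s {i. i + k < s} (\<lambda>i. i + k)"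
  unfolding partial_perm_mat_def
proof (intro conjI allI impI)
  fix i j assume "i < s" and "j < s"
  then have "i \<le> j \<and> j - i = k \<longleftrightarrow> i \<in> {i. i + k < s} \<and> j = i + k"
    by auto
  with \<open>i < s\<close> \<open>j < s\<close> show "(jordan_block s (0 :: 'a) ^\<^sub>m k) $$ (i, j) =
      (if i \<in> {i. i + k < s} \<and> j = i + k then 1 else 0)"
    unfolding jordan_block_zero_pow by (simp only: index_mat split_conv)
qed (auto simp: inj_on_def)

definition jordan_pow_rank :: "(nat \<times> 'a) list \<Rightarrow> nat \<Rightarrow> nat" where
  "jordan_pow_rank n_as k = (\<Sum>(s, a)\<leftarrow>n_as. s - k)"

lemma jordan_pow_rank_eq_0: "sum_list (map fst n_as) \<le> k \<Longrightarrow> jordan_pow_rank n_as k = 0"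
  unfolding jordan_pow_rank_def by (induction n_as) auto

lemma num_blocks_eq_jordan_pow_rank_diff:
  assumes "1 \<le> k"
  shows "int (num_blocks n_as k) = int (jordan_pow_rank n_as (k - 1))
    - 2 * int (jordan_pow_rank n_as k) + int (jordan_pow_rank n_as (k + 1))"
  using assms by (induction n_as) (auto simp: num_blocks_def jordan_pow_rank_def)

lemma partial_perm_mat_jordan_matrix_pow:
  assumes "\<forall>(s, a)\<in>set n_as. 0 < s \<longrightarrow> a = (0 :: 'a :: field)"
  shows "\<exists>I f. partial_perm_mat (jordan_matrix n_as ^\<^sub>m k) (sum_list (map fst n_as)) I f \<and>
    card I = jordan_pow_rank n_as k"
  using assms
proof (induction n_as)
  case Nil
  show ?case
    unfolding jordan_matrix_pow partial_perm_mat_def jordan_pow_rank_def by auto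
next
  case (Cons sa n_as)
  obtain s a where sa: "sa = (s, a)"
    by force
  let ?d = "sum_list (map fst n_as)"
  obtain I f where IH: "partial_perm_mat (jordan_matrix n_as ^\<^sub>m k) ?d I f"
    "card I = jordan_pow_rank n_as k"
    using Cons by auto
  have "jordan_block s a = jordan_block s 0"
    using Cons.prems sa by (cases "s = 0") (auto intro: eq_matI)
  then have block: "partial_perm_mat (jordan_block s a ^\<^sub>m k) s {i. i + k < s} (\<lambda>i. i + k)"
    using partial_perm_mat_jordan_block_zero_pow by metis
  have "jordan_matrix n_as ^\<^sub>m k \<in> carrier_mat ?d ?d"
    using IH(1) unfolding partial_perm_mat_def by blast
  then have split: "jordan_matrix (sa # n_as) ^\<^sub>m k = four_block_mat (jordan_block s a ^\<^sub>m k)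
      (0\<^sub>m s ?d) (0\<^sub>m ?d s) (jordan_matrix n_as ^\<^sub>m k)"
    unfolding jordan_matrix_pow sa by (simp add: Let_def)
  have "{i. i + k < s} = {..<s - k}"
    by auto
  moreover have "finite I"
    using IH(1) finite_subset unfolding partial_perm_mat_def by blast
  ultimately have "card ({i. i + k < s} \<union> (\<lambda>i. i + s) ` I) = jordan_pow_rank (sa # n_as) k"
    using IH(2) card_Un_image_add[of "{i. i + k < s}" s I] sa
    by (simp add: jordan_pow_rank_def)
  then show ?case
    unfolding split using partial_perm_mat_four_block_mat[OF block IH(1)] sa by auto
qed

lemma vec_norm_nilpotent_jordan_matrix_le:
  assumes "\<forall>(s, a)\<in>set n_as. 0 < s \<longrightarrow> a = 0" and "x \<in> carrier_vec (sum_list (map fst n_as))"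
  shows "vec_norm (jordan_matrix n_as *\<^sub>v x) \<le> vec_norm x"
proof -
  have "jordan_matrix n_as ^\<^sub>m 1 = jordan_matrix n_as"
    by simp
  then show ?thesis
    using partial_perm_mat_jordan_matrix_pow[OF assms(1), of 1] vec_norm_partial_perm_mat_le assms(2)
    by metis
qed

lemma jordan_pow_rank_eq_if_almost_intertwined:
  assumes zero_n_as: "\<forall>(s, a)\<in>set n_as. 0 < s \<longrightarrow> a = 0" and zero_m_as: "\<forall>(s, a)\<in>set m_as. 0 < s \<longrightarrow> a = 0"
    and A: "A = jordan_matrix n_as" "A \<in> carrier_mat n n"
    and B: "B = jordan_matrix m_as" "B \<in> carrier_mat n n"
    and C: "C \<in> carrier_mat n n" and Ci: "Ci \<in> carrier_mat n n"
    and inv: "C * Ci = 1\<^sub>m n" "Ci * C = 1\<^sub>m n"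
    and Ci_le: "\<And>x. x \<in> carrier_vec n \<Longrightarrow> vec_norm (Ci *\<^sub>v x) \<le> \<xi> * vec_norm x"
    and defect: "\<And>x. x \<in> carrier_vec n \<Longrightarrow> vec_norm ((A * C - C * B) *\<^sub>v x) \<le> \<epsilon> * vec_norm x"
    and "0 \<le> \<xi>" and "0 \<le> \<epsilon>" and small: "real k * \<epsilon> * \<xi> < 1"
  shows "jordan_pow_rank n_as k = jordan_pow_rank m_as k"
proof -
  have dims: "sum_list (map fst n_as) = n" "sum_list (map fst m_as) = n"
    using A B by auto
  obtain I f where I: "partial_perm_mat (A ^\<^sub>m k) n I f" "card I = jordan_pow_rank n_as k"
    using partial_perm_mat_jordan_matrix_pow[OF zero_n_as] A dims by metis
  obtain J g where J: "partial_perm_mat (B ^\<^sub>m k) n J g" "card J = jordan_pow_rank m_as k"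
    using partial_perm_mat_jordan_matrix_pow[OF zero_m_as] B dims by metis
  have defect_pow: "vec_norm ((A ^\<^sub>m k * C - C * B ^\<^sub>m k) *\<^sub>v x) \<le> real k * \<epsilon> * vec_norm x"
    if "x \<in> carrier_vec n" for x
    using vec_norm_intertwining_defect_pow_le[OF A(2) B(2) C _ _ defect \<open>0 \<le> \<epsilon>\<close> that]
      vec_norm_nilpotent_jordan_matrix_le zero_n_as zero_m_as A B dims by metis
  have "card J \<le> card I"
    by (rule partial_perm_mat_card_ge_if_almost_intertwined[OF I(1) J(1) C Ci inv(2) Ci_le defect_pow])
      (use \<open>0 \<le> \<xi>\<close> small in auto)
  moreover have "card I \<le> card J"
    by (rule partial_perm_mat_card_le_if_almost_intertwined[OF I(1) J(1) C Ci inv(1) Ci_le defect_pow])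
      (use \<open>0 \<le> \<epsilon>\<close> small in auto)
  ultimately show ?thesis
    using I(2) J(2) by simp
qed

lemma mult_lt_1_of_lt_inverse_fact_pow:
  fixes \<xi> \<epsilon> :: real
  assumes "1 \<le> \<xi>" and "0 \<le> \<epsilon>" and "k < n" and "\<epsilon> < 1 / (real n * fact n * \<xi> ^ n)"
  shows "real k * \<epsilon> * \<xi> < 1"
proof -
  have "0 < n"
    using assms(3) by simp
  have "\<xi> \<le> \<xi> ^ n"
    using assms(1) \<open>0 < n\<close> power_increasing[of 1 n \<xi>] by simp
  also have "\<dots> \<le> fact n * \<xi> ^ n"
    using assms(1) by simp
  finally have "real k * \<xi> \<le> real n * (fact n * \<xi> ^ n)"
    using assms(1,3) by (intro mult_mono) auto
  then have "real k * \<epsilon> * \<xi> \<le> \<epsilon> * (real n * fact n * \<xi> ^ n)"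
    using assms(2) mult_left_mono by (fastforce simp: mult_ac)
  also have "\<dots> < 1"
    using assms(1,4) \<open>0 < n\<close> by (simp add: less_divide_eq mult_ac)
  finally show ?thesis .
qed

theorem proposition11:
  fixes n :: nat and A B :: "complex mat" and n_as m_as :: "(nat \<times> complex) list"
    and \<xi> \<epsilon> :: real
  assumes "A \<in> carrier_mat n n" and "B \<in> carrier_mat n n"
    and "A = jordan_matrix n_as" and "B = jordan_matrix m_as"
    and "nilpotent_mat A" and "nilpotent_mat B"
    and "\<xi> > 0"
    and "C \<in> carrier_mat n n" and "Ci \<in> carrier_mat n n"
    and "C * Ci = 1\<^sub>m n" and "Ci * C = 1\<^sub>m n"
    and "op_norm C \<le> \<xi>" and "op_norm Ci \<le> \<xi>"
    and "op_norm (A * C - C * B) = \<epsilon>"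
    and "\<epsilon> < 1 / (real n * fact n * \<xi> ^ n)"
  shows "\<forall>k \<ge> 1. num_blocks n_as k = num_blocks m_as k"
proof -
  have zero: "\<forall>(s, a)\<in>set n_as. 0 < s \<longrightarrow> a = 0" "\<forall>(s, a)\<in>set m_as. 0 < s \<longrightarrow> a = 0"
    using nilpotent_jordan_matrix_eigenvalues_zero assms(3-6) by blast+
  have D: "A * C - C * B \<in> carrier_mat n n"
    using assms(1,2,8) by auto
  have rank_eq: "jordan_pow_rank n_as k = jordan_pow_rank m_as k" if "k < n" for k
  proof -
    have "0 < n"
      using that by simp
    have "0 \<le> \<epsilon>"
      using op_norm_nonneg[OF D \<open>0 < n\<close>] assms(14) by simp
    have "1 \<le> \<xi> * \<xi>"
      using order_trans[OF op_norm_mult_op_norm_inverse_ge_1[OF assms(8-10) \<open>0 < n\<close>]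
          mult_mono[OF assms(12,13)]] op_norm_nonneg[OF assms(9) \<open>0 < n\<close>] assms(7) by simp
    then have "1 \<le> \<xi>"
      using assms(7) mult_le_cancel_left1 by fastforce
    then have "real k * \<epsilon> * \<xi> < 1"
      using mult_lt_1_of_lt_inverse_fact_pow \<open>0 \<le> \<epsilon>\<close> that assms(15) by blast
    then show ?thesis
      using vec_norm_mult_mat_vec_le_of_op_norm_le assms(7,9,13,14) D \<open>0 \<le> \<epsilon>\<close>
      by (intro jordan_pow_rank_eq_if_almost_intertwined[OF zero assms(3,1) assms(4,2) assms(8-11)])
        auto
  qed
  have "sum_list (map fst n_as) = n" and "sum_list (map fst m_as) = n"
    using assms(1-4) carrier_matD(1) jordan_matrix_dim(1) by metis+
  then have "jordan_pow_rank n_as k = jordan_pow_rank m_as k" for k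
    using rank_eq[of k] jordan_pow_rank_eq_0[of n_as k] jordan_pow_rank_eq_0[of m_as k]
    by (cases "k < n") auto
  then show ?thesis
    using num_blocks_eq_jordan_pow_rank_diff by (metis of_nat_eq_iff)
qed

end
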